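(* Let $h(p):=-s_\phi(p,p)$, $C:=\mathbb{E}[Q\mid S]$, $\mathrm{GL}(S):=\mathbb{E}[d_\phi(C,Q)]$, let $S_B$ be a binned version of $S$, and let $\mathscr{R}:\mathcal{X}\to\mathbb{N}$ be a partition of the feature space (write $\mathscr{R}$ for $\mathscr{R}(X)$). Define $\mathrm{GL}_{\mathrm{explained}}(S_B):=\mathbb{E}[\mathrm{Var}_h(\mathbb{E}[Q\mid S_B,\mathscr{R}]\mid S_B)]$, $\mathrm{GL}_{\mathrm{residual}}(S_B):=\mathbb{E}[\mathrm{Var}_h(Q\mid S_B,\mathscr{R})]$ and $\mathrm{GL}_{\mathrm{induced}}(S,S_B):=\mathbb{E}[\mathrm{Var}_h(C\mid S_B)]$. Then $$\mathrm{GL}(S)=\mathrm{GL}_{\mathrm{explained}}(S_B)-\mathrm{GL}_{\mathrm{induced}}(S,S_B)+\mathrm{GL}_{\mathrm{residual}}(S_B).$$ If the scoring rule is proper, then $\mathrm{GL}(S)\ge \mathrm{GL}_{\mathrm{explained}}(S_B)-\mathrm{GL}_{\mathrm{induced}}(S,S_B)$.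
   Context: Let $(X,Y)$ be jointly distributed with $X\in\mathcal{X}$ and $Y\in\{e_1,\dots,e_K\}$ (one-hot vectors of $\mathbb{R}^K$); $\Delta_K$ is the probability simplex; $Q\in\Delta_K$ with $Q_k:=P(Y=e_k\mid X)$; $S=f(X)\in\Delta_K$ for a classifier $f$. A scoring rule is $\phi:\Delta_K\times\{e_1,\dots,e_K\}\to\mathbb{R}$, with $s_\phi(P,q):=\sum_k\phi(P,e_k)q_k$ and $d_\phi(P,q):=s_\phi(P,q)-s_\phi(q,q)$; $\phi$ is proper if $d_\phi\ge0$. For $f:\mathbb{R}^d\to\mathbb{R}$, $\mathrm{Var}_f(U\mid V):=\mathbb{E}[f(U)\mid V]-f(\mathbb{E}[U\mid V])$. Binned classifier: given a partition $\{\mathcal{B}_j\}_{1\le j\le J}$ of $\Delta_K$, $S_B$ equals $\mathbb{E}[S\mid S\in\mathcal{B}_j]$ on $\{S\in\mathcal{B}_j\}$. All required expectations are assumed to exist. *)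

theory Defs
  imports "HOL-Probability.Probability"
begin

text \<open>Vectors of R^K are modelled as real^'k with 'k a finite index type (K = CARD('k)).
  The one-hot vector e_k is axis k 1.  A scoring rule phi(P, e_k) is modelled as
  phi P k.\<close>

definition prob_simplex :: "(real^'k) set" where
  "prob_simplex = {p. (\<forall>i. 0 \<le> p $ i) \<and> (\<Sum>i\<in>UNIV. p $ i) = 1}"

definition s_phi :: "(real^'k \<Rightarrow> 'k \<Rightarrow> real) \<Rightarrow> real^'k \<Rightarrow> real^'k \<Rightarrow> real" where
  "s_phi phi P q = (\<Sum>k\<in>UNIV. phi P k * q $ k)"

definition d_phi :: "(real^'k \<Rightarrow> 'k \<Rightarrow> real) \<Rightarrow> real^'k \<Rightarrow> real^'k \<Rightarrow> real" where
  "d_phi phi P q = s_phi phi P q - s_phi phi q q"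

definition proper_rule :: "(real^'k \<Rightarrow> 'k \<Rightarrow> real) \<Rightarrow> bool" where
  "proper_rule phi = (\<forall>P\<in>prob_simplex. \<forall>q\<in>prob_simplex. 0 \<le> d_phi phi P q)"

definition cond_exp_vec :: "'a measure \<Rightarrow> 'a measure \<Rightarrow> ('a \<Rightarrow> real^'k) \<Rightarrow> 'a \<Rightarrow> real^'k" where
  "cond_exp_vec M F U = (\<lambda>\<omega>. \<chi> i. real_cond_exp M F (\<lambda>w. U w $ i) \<omega>)"

definition Var_cond :: "'a measure \<Rightarrow> 'a measure \<Rightarrow> (real^'k \<Rightarrow> real) \<Rightarrow> ('a \<Rightarrow> real^'k) \<Rightarrow> 'a \<Rightarrow> real" where
  "Var_cond M F h U = (\<lambda>\<omega>. real_cond_exp M F (\<lambda>w. h (U w)) \<omega> - h (cond_exp_vec M F U \<omega>))"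

text \<open>Binned classifier: the partition of the prob_simplex is given by the cell-index map bin;
  on the event that S lies in cell j, S_B equals E[S | S in cell j] (elementary
  conditional expectation).\<close>
definition binned :: "'a measure \<Rightarrow> (real^'k \<Rightarrow> nat) \<Rightarrow> ('a \<Rightarrow> real^'k) \<Rightarrow> 'a \<Rightarrow> real^'k" where
  "binned M bin S \<omega> =
     (\<chi> i. (\<integral>w. S w $ i * indicator {w\<in>space M. bin (S w) = bin (S \<omega>)} w \<partial>M)
            / measure M {w\<in>space M. bin (S w) = bin (S \<omega>)})"

end

theory Submission
  imports Defs
begin

text \<open>With h(p) = -s(p,p), the tower property E[phi(E[U|F])_k U_k] = E[phi(E[U|F])_k E[U|F]_k]
  turns the expected divergence of U from E[U|F] into E[h(U)] - E[h(E[U|F])], which is also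
  E[Var_h(U|F)]. Hence GL(S) = E[h(Q)] - E[h(C)], while explained - induced + residual telescopes to
  E[h(Q)] - E[h(C)] + E[h(E[C|S_B])] - E[h(E[E[Q|S_B,R]|S_B])]. The last two terms cancel: since
  sigma(S_B) is coarser than both sigma(S) and sigma(S_B,R), both conditional expectations equal
  E[Q|S_B]. For a proper rule the residual term, itself an expected divergence, is nonnegative.\<close>

lemma borel_measurable_vec_nth [measurable (raw)]:
  fixes U :: "'a \<Rightarrow> real^'k::finite"
  assumes "U \<in> borel_measurable M"
  shows "(\<lambda>x. U x $ i) \<in> borel_measurable M"
  using borel_measurable_inner[OF assms borel_measurable_const[of "axis i 1"]]
  by (simp add: cart_eq_inner_axis)

lemma borel_measurable_vec_lambda [measurable (raw)]:
  assumes "\<And>i. (\<lambda>x. f i x) \<in> borel_measurable M"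
  shows "(\<lambda>x. \<chi> i. f i x :: real^'k::finite) \<in> borel_measurable M"
proof (rule borel_measurable_euclidean_space[THEN iffD2], rule ballI)
  fix b :: "real^'k"
  assume "b \<in> Basis"
  then obtain i where "b = axis i 1"
    by (auto simp: Basis_vec_def)
  with assms show "(\<lambda>x. (\<chi> i. f i x) \<bullet> b) \<in> borel_measurable M"
    by (simp flip: cart_eq_inner_axis)
qed

lemma borel_measurable_cond_exp_vec [measurable]:
  "cond_exp_vec M F U \<in> borel_measurable F"
  "cond_exp_vec M F U \<in> borel_measurable M"
  unfolding cond_exp_vec_def by measurable

lemma prob_simplex_nth_bounds:
  assumes "p \<in> prob_simplex"
  shows "0 \<le> p $ i" "p $ i \<le> 1"
proof -
  show "0 \<le> p $ i"
    using assms by (simp add: prob_simplex_def)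
  have "p $ i \<le> (\<Sum>j\<in>UNIV. p $ j)"
    using assms by (intro member_le_sum) (auto simp: prob_simplex_def)
  then show "p $ i \<le> 1"
    using assms by (simp add: prob_simplex_def)
qed

lemma axis_in_prob_simplex: "axis k 1 \<in> prob_simplex"
  by (simp add: prob_simplex_def axis_def)

lemma subalgebra_vimage_algebra:
  assumes "f \<in> measurable M N"
  shows "subalgebra M (vimage_algebra (space M) f N)"
  using sets_image_in_sets[OF refl assms] by (simp add: subalgebra_def)

lemma subalgebra_vimage_algebra_comp:
  assumes "f \<in> \<Omega> \<rightarrow> space N" and "g \<in> measurable N K"
  shows "subalgebra (vimage_algebra \<Omega> f N) (vimage_algebra \<Omega> (\<lambda>x. g (f x)) K)"
  using measurable_compose[OF measurable_vimage_algebra1[OF assms(1)] assms(2)]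
  by (auto dest: subalgebra_vimage_algebra)

lemma binned_eq_measurable_comp:
  fixes S :: "'a \<Rightarrow> real^'k::finite"
  assumes "bin \<in> measurable borel (count_space UNIV)"
  obtains g where "g \<in> borel_measurable borel" and "binned M bin S = (\<lambda>\<omega>. g (S \<omega>))"
proof
  define mean :: "nat \<Rightarrow> real^'k" where "mean n =
    (\<chi> i. (\<integral>w. S w $ i * indicator {w\<in>space M. bin (S w) = n} w \<partial>M)
            / measure M {w\<in>space M. bin (S w) = n})" for n
  show "(\<lambda>p. mean (bin p)) \<in> borel_measurable borel"
    using assms by measurable
  show "binned M bin S = (\<lambda>\<omega>. mean (bin (S \<omega>)))"
    by (simp add: binned_def mean_def fun_eq_iff)
qed

lemma subalgebra_binned:
  fixes S :: "'a \<Rightarrow> real^'k::finite"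
  assumes S: "S \<in> borel_measurable M" and bin: "bin \<in> measurable borel (count_space UNIV)"
    and Z: "Z \<in> measurable M N"
  defines "SB \<equiv> binned M bin S"
  shows "subalgebra M (vimage_algebra (space M) S borel)"
    and "subalgebra (vimage_algebra (space M) S borel) (vimage_algebra (space M) SB borel)"
    and "subalgebra M (vimage_algebra (space M) (\<lambda>\<omega>. (SB \<omega>, Z \<omega>)) (borel \<Otimes>\<^sub>M N))"
    and "subalgebra (vimage_algebra (space M) (\<lambda>\<omega>. (SB \<omega>, Z \<omega>)) (borel \<Otimes>\<^sub>M N))
           (vimage_algebra (space M) SB borel)"
proof -
  obtain g where g: "g \<in> borel_measurable borel" and SB: "SB = (\<lambda>\<omega>. g (S \<omega>))"
    using binned_eq_measurable_comp[OF bin] unfolding SB_def by blast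
  show "subalgebra M (vimage_algebra (space M) S borel)"
    using S by (rule subalgebra_vimage_algebra)
  show "subalgebra (vimage_algebra (space M) S borel) (vimage_algebra (space M) SB borel)"
    using subalgebra_vimage_algebra_comp[OF _ g, of S "space M"] unfolding SB by simp
  have SB_Z: "(\<lambda>\<omega>. (SB \<omega>, Z \<omega>)) \<in> measurable M (borel \<Otimes>\<^sub>M N)"
    using S g Z unfolding SB by measurable
  then show "subalgebra M (vimage_algebra (space M) (\<lambda>\<omega>. (SB \<omega>, Z \<omega>)) (borel \<Otimes>\<^sub>M N))"
    by (rule subalgebra_vimage_algebra)
  from SB_Z have "(\<lambda>\<omega>. (SB \<omega>, Z \<omega>)) \<in> space M \<rightarrow> space (borel \<Otimes>\<^sub>M N)"
    by (rule measurable_space[THEN funcsetI])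
  from subalgebra_vimage_algebra_comp[OF this measurable_fst]
  show "subalgebra (vimage_algebra (space M) (\<lambda>\<omega>. (SB \<omega>, Z \<omega>)) (borel \<Otimes>\<^sub>M N))
          (vimage_algebra (space M) SB borel)"
    by simp
qed

lemma (in prob_space) subalgebra_imp_finite_measure_subalgebra:
  "subalgebra M F \<Longrightarrow> finite_measure_subalgebra M F"
  by unfold_locales

lemma (in finite_measure) integrable_vec_nth_prob_simplex:
  fixes U :: "'a \<Rightarrow> real^'k::finite"
  assumes "U \<in> borel_measurable M" and "AE x in M. U x \<in> prob_simplex"
  shows "integrable M (\<lambda>x. U x $ i)"
proof (rule integrable_const_bound[where B = 1])
  show "AE x in M. norm (U x $ i) \<le> 1"
    using assms(2) by eventually_elim (simp add: prob_simplex_nth_bounds abs_le_iff)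
qed (use assms(1) in measurable)

lemma (in finite_measure_subalgebra) AE_cond_exp_vec_in_prob_simplex:
  fixes U :: "'a \<Rightarrow> real^'k::finite"
  assumes "U \<in> borel_measurable M" and "AE x in M. U x \<in> prob_simplex"
  shows "AE x in M. cond_exp_vec M F U x \<in> prob_simplex"
proof -
  have integrable: "integrable M (\<lambda>x. U x $ i)" for i
    using integrable_vec_nth_prob_simplex[OF assms] .
  have "AE x in M. \<forall>i. 0 \<le> real_cond_exp M F (\<lambda>x. U x $ i) x"
    unfolding AE_all_countable
  proof
    fix i
    show "AE x in M. 0 \<le> real_cond_exp M F (\<lambda>x. U x $ i) x"
      using assms
      by (intro real_cond_exp_pos) (auto elim: eventually_mono simp: prob_simplex_nth_bounds)
  qed
  moreover have "AE x in M. real_cond_exp M F (\<lambda>x. \<Sum>i\<in>UNIV. U x $ i) x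
                   = (\<Sum>i\<in>UNIV. real_cond_exp M F (\<lambda>x. U x $ i) x)"
    using integrable by (rule real_cond_exp_sum)
  moreover have "AE x in M. real_cond_exp M F (\<lambda>x. \<Sum>i\<in>UNIV. U x $ i) x
                   = real_cond_exp M F (\<lambda>x. 1) x"
    using assms by (intro real_cond_exp_cong) (auto elim: eventually_mono simp: prob_simplex_def)
  moreover have "AE x in M. real_cond_exp M F (\<lambda>x. 1) x = 1"
    by (intro real_cond_exp_F_meas) auto
  ultimately show ?thesis
    by eventually_elim (simp add: prob_simplex_def cond_exp_vec_def)
qed

context sigma_finite_subalgebra
begin

lemma cond_exp_vec_nested_subalg:
  fixes U :: "'a \<Rightarrow> real^'k::finite"
  assumes "subalgebra M G" "subalgebra G F" and "\<And>i. integrable M (\<lambda>x. U x $ i)"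
  shows "AE x in M. cond_exp_vec M F (cond_exp_vec M G U) x = cond_exp_vec M F U x"
proof -
  have "AE x in M. \<forall>i. real_cond_exp M F (\<lambda>w. real_cond_exp M G (\<lambda>w. U w $ i) w) x
                       = real_cond_exp M F (\<lambda>w. U w $ i) x"
    using real_cond_exp_nested_subalg[OF assms] by (simp add: AE_all_countable)
  then show ?thesis
    by eventually_elim (simp add: cond_exp_vec_def vec_eq_iff)
qed

lemma integral_s_phi_cond_exp_vec:
  fixes U :: "'a \<Rightarrow> real^'k::finite"
  defines "G \<equiv> cond_exp_vec M F U"
  assumes "\<And>k. (\<lambda>p. phi p k) \<in> borel_measurable borel" and "U \<in> borel_measurable M"
    and "\<And>k. integrable M (\<lambda>x. phi (G x) k * U x $ k)"
  shows "(\<integral>x. s_phi phi (G x) (U x) \<partial>M) = (\<integral>x. s_phi phi (G x) (G x) \<partial>M)"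
proof -
  have "(\<lambda>x. phi (G x) k) \<in> borel_measurable F" for k
    using assms(2) unfolding G_def by measurable
  then have "integrable M (\<lambda>x. phi (G x) k * G x $ k)"
    and "(\<integral>x. phi (G x) k * G x $ k \<partial>M) = (\<integral>x. phi (G x) k * U x $ k \<partial>M)" for k
    using real_cond_exp_intg[OF assms(4)] assms(3) by (simp_all add: G_def cond_exp_vec_def)
  with assms(4) show ?thesis
    unfolding s_phi_def by (simp only: Bochner_Integration.integral_sum)
qed

lemma integral_Var_cond:
  fixes U :: "'a \<Rightarrow> real^'k::finite"
  assumes "integrable M (\<lambda>x. h (U x))" and "integrable M (\<lambda>x. h (cond_exp_vec M F U x))"
  shows "(\<integral>x. Var_cond M F h U x \<partial>M)
           = (\<integral>x. h (U x) \<partial>M) - (\<integral>x. h (cond_exp_vec M F U x) \<partial>M)"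
  using assms real_cond_exp_int[OF assms(1)] by (simp add: Var_cond_def)

lemma integral_d_phi_cond_exp_vec:
  fixes U :: "'a \<Rightarrow> real^'k::finite"
  defines "G \<equiv> cond_exp_vec M F U"
  assumes h: "\<And>p. h p = - s_phi phi p p"
    and "\<And>k. (\<lambda>p. phi p k) \<in> borel_measurable borel" and "U \<in> borel_measurable M"
    and "\<And>k. integrable M (\<lambda>x. phi (G x) k * U x $ k)" and "integrable M (\<lambda>x. h (U x))"
  shows "(\<integral>x. d_phi phi (G x) (U x) \<partial>M) = (\<integral>x. h (U x) \<partial>M) - (\<integral>x. h (G x) \<partial>M)"
proof -
  have "integrable M (\<lambda>x. s_phi phi (G x) (U x))"
    unfolding s_phi_def using assms(5) by (rule Bochner_Integration.integrable_sum)
  moreover have "integrable M (\<lambda>x. s_phi phi (U x) (U x))"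
    using assms(6) by (simp add: h)
  ultimately have "(\<integral>x. d_phi phi (G x) (U x) \<partial>M)
      = (\<integral>x. s_phi phi (G x) (U x) \<partial>M) - (\<integral>x. s_phi phi (U x) (U x) \<partial>M)"
    by (simp add: d_phi_def)
  also have "\<dots> = (\<integral>x. s_phi phi (G x) (G x) \<partial>M) - (\<integral>x. s_phi phi (U x) (U x) \<partial>M)"
    using integral_s_phi_cond_exp_vec[OF assms(3,4)] assms(5) by (simp add: G_def)
  finally show ?thesis
    by (simp add: h)
qed

lemma grouping_loss_decomposition:
  fixes Q :: "'a \<Rightarrow> real^'k::finite" and FS FR :: "'a measure"
  defines "C \<equiv> cond_exp_vec M FS Q" and "G \<equiv> cond_exp_vec M FR Q"
  assumes h: "\<And>p. h p = - s_phi phi p p"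
    and phi: "\<And>k. (\<lambda>p. phi p k) \<in> borel_measurable borel"
    and FS: "subalgebra M FS" "subalgebra FS F" and FR: "subalgebra M FR" "subalgebra FR F"
    and Q: "Q \<in> borel_measurable M" "\<And>i. integrable M (\<lambda>x. Q x $ i)"
    and score: "\<And>k. integrable M (\<lambda>x. phi (C x) k * Q x $ k)"
    and int: "integrable M (\<lambda>x. h (Q x))" "integrable M (\<lambda>x. h (C x))"
      "integrable M (\<lambda>x. h (G x))" "integrable M (\<lambda>x. h (cond_exp_vec M F G x))"
      "integrable M (\<lambda>x. h (cond_exp_vec M F C x))"
  shows "(\<integral>x. d_phi phi (C x) (Q x) \<partial>M)
           = (\<integral>x. Var_cond M F h G x \<partial>M) - (\<integral>x. Var_cond M F h C x \<partial>M)
             + (\<integral>x. Var_cond M FR h Q x \<partial>M)"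
proof -
  interpret FS: sigma_finite_subalgebra M FS
    using nested_subalg_is_sigma_finite FS .
  interpret FR: sigma_finite_subalgebra M FR
    using nested_subalg_is_sigma_finite FR .
  have "(\<integral>x. d_phi phi (C x) (Q x) \<partial>M) = (\<integral>x. h (Q x) \<partial>M) - (\<integral>x. h (C x) \<partial>M)"
    using FS.integral_d_phi_cond_exp_vec[OF h phi Q(1)] score int(1) by (simp add: C_def)
  moreover have "(\<integral>x. Var_cond M F h G x \<partial>M)
      = (\<integral>x. h (G x) \<partial>M) - (\<integral>x. h (cond_exp_vec M F G x) \<partial>M)"
    using integral_Var_cond int(3,4) .
  moreover have "(\<integral>x. Var_cond M F h C x \<partial>M)
      = (\<integral>x. h (C x) \<partial>M) - (\<integral>x. h (cond_exp_vec M F C x) \<partial>M)"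
    using integral_Var_cond int(2,5) .
  moreover have "(\<integral>x. Var_cond M FR h Q x \<partial>M) = (\<integral>x. h (Q x) \<partial>M) - (\<integral>x. h (G x) \<partial>M)"
    using FR.integral_Var_cond int(1,3) by (simp add: G_def)
  moreover have "(\<integral>x. h (cond_exp_vec M F G x) \<partial>M) = (\<integral>x. h (cond_exp_vec M F C x) \<partial>M)"
  proof (rule integral_cong_AE)
    show "AE x in M. h (cond_exp_vec M F G x) = h (cond_exp_vec M F C x)"
      using cond_exp_vec_nested_subalg[OF FR Q(2)] cond_exp_vec_nested_subalg[OF FS Q(2)]
      unfolding C_def G_def by eventually_elim simp
  qed (use int(4,5) in auto)
  ultimately show ?thesis
    by linarith
qed

end

lemma (in finite_measure_subalgebra) integral_Var_cond_nonneg: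
  fixes U :: "'a \<Rightarrow> real^'k::finite"
  defines "G \<equiv> cond_exp_vec M F U"
  assumes "proper_rule phi" and h: "\<And>p. h p = - s_phi phi p p"
    and "\<And>k. (\<lambda>p. phi p k) \<in> borel_measurable borel"
    and U: "U \<in> borel_measurable M" "AE x in M. U x \<in> prob_simplex"
    and score: "\<And>k. integrable M (\<lambda>x. phi (G x) k * U x $ k)"
    and int: "integrable M (\<lambda>x. h (U x))" "integrable M (\<lambda>x. h (G x))"
  shows "0 \<le> (\<integral>x. Var_cond M F h U x \<partial>M)"
proof -
  have "0 \<le> (\<integral>x. d_phi phi (G x) (U x) \<partial>M)"
  proof (rule integral_nonneg_AE)
    show "AE x in M. 0 \<le> d_phi phi (G x) (U x)"
      using AE_cond_exp_vec_in_prob_simplex[OF U] U(2)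
      by eventually_elim (use \<open>proper_rule phi\<close> in \<open>simp add: G_def proper_rule_def\<close>)
  qed
  also have "\<dots> = (\<integral>x. Var_cond M F h U x \<partial>M)"
    using integral_d_phi_cond_exp_vec[OF h assms(4) U(1)] integral_Var_cond[OF int[unfolded G_def]]
      score int(1)
    by (simp add: G_def)
  finally show ?thesis .
qed

theorem proposition2:
  fixes M :: "'a measure" and Mx :: "'x measure"
    and X :: "'a \<Rightarrow> 'x" and Y :: "'a \<Rightarrow> real^'k::finite"
    and f :: "'x \<Rightarrow> real^'k" and phi :: "real^'k \<Rightarrow> 'k \<Rightarrow> real"
    and bin :: "real^'k \<Rightarrow> nat" and J :: nat and R :: "'x \<Rightarrow> nat"
  assumes "prob_space M"
    and "X \<in> measurable M Mx"
    and "Y \<in> borel_measurable M" and "\<forall>\<omega>\<in>space M. \<exists>k. Y \<omega> = axis k 1"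
    and "f \<in> borel_measurable Mx" and "\<forall>x\<in>space Mx. f x \<in> prob_simplex"
    and "\<forall>k. (\<lambda>p. phi p k) \<in> borel_measurable borel"
    and "bin \<in> measurable borel (count_space UNIV)" and "\<forall>p\<in>prob_simplex. bin p \<in> {1..J}"
    and "R \<in> measurable Mx (count_space UNIV)"
  defines "h \<equiv> (\<lambda>p. - s_phi phi p p)"
    defines "S \<equiv> (\<lambda>\<omega>. f (X \<omega>))"
    defines "Q \<equiv> cond_exp_vec M (vimage_algebra (space M) X Mx) Y"
    defines "C \<equiv> cond_exp_vec M (vimage_algebra (space M) S borel) Q"
    defines "SB \<equiv> binned M bin S"
    defines "FB \<equiv> vimage_algebra (space M) SB borel"
    defines "FBR \<equiv> vimage_algebra (space M) (\<lambda>\<omega>. (SB \<omega>, R (X \<omega>))) (borel \<Otimes>\<^sub>M count_space UNIV)"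
  assumes "integrable M (\<lambda>\<omega>. d_phi phi (C \<omega>) (Q \<omega>))"
    and "\<forall>k. integrable M (\<lambda>\<omega>. phi (C \<omega>) k * Q \<omega> $ k)"
    and "\<forall>k. integrable M (\<lambda>\<omega>. phi (cond_exp_vec M FBR Q \<omega>) k * Q \<omega> $ k)"
    and "integrable M (\<lambda>\<omega>. h (Q \<omega>))"
    and "integrable M (\<lambda>\<omega>. h (C \<omega>))"
    and "integrable M (\<lambda>\<omega>. h (cond_exp_vec M FBR Q \<omega>))"
    and "integrable M (\<lambda>\<omega>. h (cond_exp_vec M FB (cond_exp_vec M FBR Q) \<omega>))"
    and "integrable M (\<lambda>\<omega>. h (cond_exp_vec M FB C \<omega>))"
    and "integrable M (Var_cond M FB h (cond_exp_vec M FBR Q))"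
    and "integrable M (Var_cond M FBR h Q)"
    and "integrable M (Var_cond M FB h C)"
  shows "(\<integral>\<omega>. d_phi phi (C \<omega>) (Q \<omega>) \<partial>M)
           = (\<integral>\<omega>. Var_cond M FB h (cond_exp_vec M FBR Q) \<omega> \<partial>M)
             - (\<integral>\<omega>. Var_cond M FB h C \<omega> \<partial>M)
             + (\<integral>\<omega>. Var_cond M FBR h Q \<omega> \<partial>M)
         \<and> (proper_rule phi \<longrightarrow>
             (\<integral>\<omega>. d_phi phi (C \<omega>) (Q \<omega>) \<partial>M)
               \<ge> (\<integral>\<omega>. Var_cond M FB h (cond_exp_vec M FBR Q) \<omega> \<partial>M)
                  - (\<integral>\<omega>. Var_cond M FB h C \<omega> \<partial>M))"
proof -
  interpret prob_space M by fact
  have S: "S \<in> borel_measurable M"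
    using assms(2,5) unfolding S_def by measurable
  have FS: "subalgebra M (vimage_algebra (space M) S borel)"
      "subalgebra (vimage_algebra (space M) S borel) FB"
    and FBR: "subalgebra M FBR" "subalgebra FBR FB"
    using subalgebra_binned[OF S assms(8) measurable_compose[OF assms(2,10)]]
    unfolding FB_def FBR_def SB_def by simp_all
  interpret FX: finite_measure_subalgebra M "vimage_algebra (space M) X Mx"
    using subalgebra_vimage_algebra[OF assms(2)] by (rule subalgebra_imp_finite_measure_subalgebra)
  interpret FBR: finite_measure_subalgebra M FBR
    using FBR(1) by (rule subalgebra_imp_finite_measure_subalgebra)
  interpret FB: finite_measure_subalgebra M FB
    using FBR by (intro subalgebra_imp_finite_measure_subalgebra) (auto simp: subalgebra_def)
  have "AE \<omega> in M. Y \<omega> \<in> prob_simplex"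
  proof (rule AE_I2)
    fix \<omega> assume "\<omega> \<in> space M"
    with assms(4) obtain k where "Y \<omega> = axis k 1"
      by blast
    then show "Y \<omega> \<in> prob_simplex"
      by (simp add: axis_in_prob_simplex)
  qed
  then have Q: "Q \<in> borel_measurable M" "AE \<omega> in M. Q \<omega> \<in> prob_simplex"
    using FX.AE_cond_exp_vec_in_prob_simplex[OF assms(3)] unfolding Q_def by simp_all
  have h: "\<And>p. h p = - s_phi phi p p" and phi: "\<And>k. (\<lambda>p. phi p k) \<in> borel_measurable borel"
    using assms(7) by (simp_all add: h_def)
  have "(\<integral>\<omega>. d_phi phi (C \<omega>) (Q \<omega>) \<partial>M)
          = (\<integral>\<omega>. Var_cond M FB h (cond_exp_vec M FBR Q) \<omega> \<partial>M)
            - (\<integral>\<omega>. Var_cond M FB h C \<omega> \<partial>M) + (\<integral>\<omega>. Var_cond M FBR h Q \<omega> \<partial>M)"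
    using FB.grouping_loss_decomposition[OF h phi FS FBR Q(1) integrable_vec_nth_prob_simplex[OF Q]]
      assms(19,21-25) unfolding C_def by simp
  moreover have "0 \<le> (\<integral>\<omega>. Var_cond M FBR h Q \<omega> \<partial>M)" if "proper_rule phi"
    using FBR.integral_Var_cond_nonneg[OF that h phi Q] assms(20,21,23) by simp
  ultimately show ?thesis
    by auto
qed

end
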